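(* Let $G=(V,E,w)$ be a connected edge-weighted graph with positive rational weights, at least two vertices, and maximum degree $\Delta$. The greedy algorithm applied to $U=V$ and the function $f=h+c$ returns a WPPICDS $S$ with $$|S|\le\Big(2+\ln\big(\tfrac32\cdot L\cdot W+\Delta\big)\Big)\cdot|S^*|,$$ where $S^*$ is a minimum-cardinality WPPICDS.
   Context: $N_A(v)=N(v)\cap A$, $W_A(v)=\sum_{u\in N_A(v)}w_{(v,u)}$, $W(v)=W_V(v)$, $W=\max_v W(v)$. $h(A)=\sum_{v\in V}h_A(v)$ with $h_A(v)=W(v)/2$ if $v\in A$ or $W_A(v)\ge W(v)/2$, and $h_A(v)=W_A(v)$ otherwise. For $v$ with incident edge weights $w_1,\dots,w_d$, write $w_0=W(v)/2$ and each $w_i$ as a reduced fraction $p_i/q_i$; $l(v)=\mathrm{lcm}\{q_0,\dots,q_d\}$, $L=\max_v l(v)$. $p(A)$ is the number of connected components of $G[A]$ ($p(\emptyset)=0$), $q(A)$ the number of connected components of the spanning subgraph $(V,\{e\in E: e\text{ has at least one endpoint in }A\})$, $c(A)=\frac1L(|V|-q(A)-p(A))$. The greedy algorithm: start with $S=\emptyset$; while some $u\in V\setminus S$ has $f(S\cup\{u\})-f(S)>0$, add to $S$ an element maximizing this increment (ties arbitrary); return $S$. A WPPICDS is a set $S\subseteq V$ such that every $v\in V\setminus S$ satisfies $W_S(v)\ge W(v)/2$ and $G[S]$ is connected. *)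

theory Defs
  imports Complex_Main
begin

definition nbrs :: "'a set \<Rightarrow> ('a \<Rightarrow> 'a \<Rightarrow> bool) \<Rightarrow> 'a \<Rightarrow> 'a set" where
  "nbrs V E v = {u \<in> V. E v u}"

definition num_comps :: "'a set \<Rightarrow> ('a \<Rightarrow> 'a \<Rightarrow> bool) \<Rightarrow> nat" where
  "num_comps X R = card {{y \<in> X. (x, y) \<in> {(a, b). a \<in> X \<and> b \<in> X \<and> R a b}\<^sup>*} | x. x \<in> X}"

definition simple_graph :: "'a set \<Rightarrow> ('a \<Rightarrow> 'a \<Rightarrow> bool) \<Rightarrow> bool" where
  "simple_graph V E \<longleftrightarrow> finite V \<and> (\<forall>u v. E u v \<longrightarrow> u \<in> V \<and> v \<in> V)
     \<and> (\<forall>u v. E u v \<longrightarrow> E v u) \<and> (\<forall>v. \<not> E v v)"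

definition max_degree :: "'a set \<Rightarrow> ('a \<Rightarrow> 'a \<Rightarrow> bool) \<Rightarrow> nat" where
  "max_degree V E = Max ((\<lambda>v. card (nbrs V E v)) ` V)"

definition WA :: "'a set \<Rightarrow> ('a \<Rightarrow> 'a \<Rightarrow> bool) \<Rightarrow> ('a \<Rightarrow> 'a \<Rightarrow> rat) \<Rightarrow> 'a set \<Rightarrow> 'a \<Rightarrow> rat" where
  "WA V E w A v = (\<Sum>u \<in> nbrs V E v \<inter> A. w v u)"

definition Wmax :: "'a set \<Rightarrow> ('a \<Rightarrow> 'a \<Rightarrow> bool) \<Rightarrow> ('a \<Rightarrow> 'a \<Rightarrow> rat) \<Rightarrow> rat" where
  "Wmax V E w = Max ((\<lambda>v. WA V E w V v) ` V)"

definition hA :: "'a set \<Rightarrow> ('a \<Rightarrow> 'a \<Rightarrow> bool) \<Rightarrow> ('a \<Rightarrow> 'a \<Rightarrow> rat) \<Rightarrow> 'a set \<Rightarrow> 'a \<Rightarrow> rat" where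
  "hA V E w A v = (if v \<in> A \<or> WA V E w A v \<ge> WA V E w V v / 2 then WA V E w V v / 2
                   else WA V E w A v)"

definition hfun :: "'a set \<Rightarrow> ('a \<Rightarrow> 'a \<Rightarrow> bool) \<Rightarrow> ('a \<Rightarrow> 'a \<Rightarrow> rat) \<Rightarrow> 'a set \<Rightarrow> rat" where
  "hfun V E w A = (\<Sum>v \<in> V. hA V E w A v)"

definition denom :: "rat \<Rightarrow> int" where
  "denom x = snd (quotient_of x)"

definition lv :: "'a set \<Rightarrow> ('a \<Rightarrow> 'a \<Rightarrow> bool) \<Rightarrow> ('a \<Rightarrow> 'a \<Rightarrow> rat) \<Rightarrow> 'a \<Rightarrow> int" where
  "lv V E w v = Lcm (insert (denom (WA V E w V v / 2)) ((\<lambda>u. denom (w v u)) ` nbrs V E v))"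

definition Lmax :: "'a set \<Rightarrow> ('a \<Rightarrow> 'a \<Rightarrow> bool) \<Rightarrow> ('a \<Rightarrow> 'a \<Rightarrow> rat) \<Rightarrow> int" where
  "Lmax V E w = Max ((\<lambda>v. lv V E w v) ` V)"

definition pfun :: "'a set \<Rightarrow> ('a \<Rightarrow> 'a \<Rightarrow> bool) \<Rightarrow> 'a set \<Rightarrow> nat" where
  "pfun V E A = num_comps A E"

definition qfun :: "'a set \<Rightarrow> ('a \<Rightarrow> 'a \<Rightarrow> bool) \<Rightarrow> 'a set \<Rightarrow> nat" where
  "qfun V E A = num_comps V (\<lambda>a b. E a b \<and> (a \<in> A \<or> b \<in> A))"

definition cfun :: "'a set \<Rightarrow> ('a \<Rightarrow> 'a \<Rightarrow> bool) \<Rightarrow> ('a \<Rightarrow> 'a \<Rightarrow> rat) \<Rightarrow> 'a set \<Rightarrow> real" where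
  "cfun V E w A = (real (card V) - real (qfun V E A) - real (pfun V E A)) / real_of_int (Lmax V E w)"

definition ffun :: "'a set \<Rightarrow> ('a \<Rightarrow> 'a \<Rightarrow> bool) \<Rightarrow> ('a \<Rightarrow> 'a \<Rightarrow> rat) \<Rightarrow> 'a set \<Rightarrow> real" where
  "ffun V E w A = real_of_rat (hfun V E w A) + cfun V E w A"

text \<open>Sets reachable by a run of the greedy algorithm (ties broken arbitrarily).\<close>
inductive greedy_reach :: "('a set \<Rightarrow> real) \<Rightarrow> 'a set \<Rightarrow> 'a set \<Rightarrow> bool" for f U where
  start: "greedy_reach f U {}"
| step: "greedy_reach f U S \<Longrightarrow> u \<in> U - S \<Longrightarrow> f (S \<union> {u}) - f S > 0
         \<Longrightarrow> (\<forall>u' \<in> U - S. f (S \<union> {u'}) - f S \<le> f (S \<union> {u}) - f S)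
         \<Longrightarrow> greedy_reach f U (S \<union> {u})"

definition greedy_output :: "('a set \<Rightarrow> real) \<Rightarrow> 'a set \<Rightarrow> 'a set \<Rightarrow> bool" where
  "greedy_output f U S \<longleftrightarrow> greedy_reach f U S \<and> (\<forall>u \<in> U - S. \<not> f (S \<union> {u}) - f S > 0)"

definition is_WPPICDS :: "'a set \<Rightarrow> ('a \<Rightarrow> 'a \<Rightarrow> bool) \<Rightarrow> ('a \<Rightarrow> 'a \<Rightarrow> rat) \<Rightarrow> 'a set \<Rightarrow> bool" where
  "is_WPPICDS V E w S \<longleftrightarrow> S \<subseteq> V
     \<and> (\<forall>v \<in> V - S. WA V E w S v \<ge> WA V E w V v / 2)
     \<and> num_comps S E = 1"

end

(*
  The function f = h + c attains its maximum fmax exactly on the WPPICDSs: h is maximal iff the set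
  is half-dominating, c iff both the graph of edges touching the set and the induced subgraph are
  connected. Whenever one of these fails, some vertex has a positive increment, so the greedy
  output is a WPPICDS.

  For the size bound fix a WPPICDS B. Submodularity of the capped coverage h, together with a count
  of the components merged when B is grown as a connected set, shows that the increments of the
  vertices of B recover the deficit fmax - f(A) up to (|B| - 1) / L. Scaled by L, positive increments
  are at least 1, so the scaled deficit minus |B| - 1 shrinks by the factor 1 - 1/|B| per step until
  it drops below |B| (at most |B| ln(3/2 L W + Delta) steps, the starting value being bounded via
  single-vertex increments), and from then on at most 2|B| further steps are possible.
*)
theory Submission
  imports Defs
begin

section \<open>Connected components\<close>

definition edge_rel :: "'a set \<Rightarrow> ('a \<Rightarrow> 'a \<Rightarrow> bool) \<Rightarrow> ('a \<times> 'a) set" where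
  "edge_rel X R = {(a, b). a \<in> X \<and> b \<in> X \<and> R a b}"

definition component_of :: "'a set \<Rightarrow> ('a \<Rightarrow> 'a \<Rightarrow> bool) \<Rightarrow> 'a \<Rightarrow> 'a set" where
  "component_of X R x = {y \<in> X. (x, y) \<in> (edge_rel X R)\<^sup>*}"

lemma num_comps_eq_card_components: "num_comps X R = card (component_of X R ` X)"
  unfolding num_comps_def component_of_def edge_rel_def by (simp add: Setcompr_eq_image)

lemma mem_component_of_self: "x \<in> X \<Longrightarrow> x \<in> component_of X R x"
  by (simp add: component_of_def)

lemma component_of_subset: "component_of X R x \<subseteq> X"
  by (auto simp: component_of_def)

lemma edge_rel_rtrancl_mono:
  assumes "X \<subseteq> X'" "\<And>a b. a \<in> X \<Longrightarrow> b \<in> X \<Longrightarrow> R a b \<Longrightarrow> R' a b"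
    and "(x, y) \<in> (edge_rel X R)\<^sup>*"
  shows "(x, y) \<in> (edge_rel X' R')\<^sup>*"
proof -
  have "edge_rel X R \<subseteq> edge_rel X' R'" using assms(1,2) by (auto simp: edge_rel_def)
  then show ?thesis using assms(3) rtrancl_mono by blast
qed

context
  fixes R :: "'a \<Rightarrow> 'a \<Rightarrow> bool"
  assumes R_sym: "\<And>a b. R a b \<Longrightarrow> R b a"
begin

lemma sym_edge_rel_rtrancl: "sym ((edge_rel X R)\<^sup>*)"
proof -
  have "(edge_rel X R)\<inverse> = edge_rel X R" unfolding edge_rel_def using R_sym by blast
  then show ?thesis by (metis sym_conv_converse_eq sym_rtrancl)
qed

lemma component_of_eq_iff:
  assumes "x \<in> X" "y \<in> X"
  shows "component_of X R x = component_of X R y \<longleftrightarrow> (x, y) \<in> (edge_rel X R)\<^sup>*"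
proof
  assume "component_of X R x = component_of X R y"
  then have "y \<in> component_of X R x" using mem_component_of_self[OF assms(2)] by simp
  then show "(x, y) \<in> (edge_rel X R)\<^sup>*" by (simp add: component_of_def)
next
  assume "(x, y) \<in> (edge_rel X R)\<^sup>*"
  moreover then have "(y, x) \<in> (edge_rel X R)\<^sup>*" using sym_edge_rel_rtrancl by (meson symD)
  ultimately show "component_of X R x = component_of X R y"
    unfolding component_of_def by (meson rtrancl_trans)
qed

lemma component_of_eq_if_mem:
  assumes "y \<in> component_of X R x" "x \<in> X"
  shows "component_of X R y = component_of X R x"
proof -
  have "y \<in> X" "(x, y) \<in> (edge_rel X R)\<^sup>*" using assms(1) by (auto simp: component_of_def)
  then show ?thesis using component_of_eq_iff[OF assms(2)] by metis
qed

lemma component_of_eq_if_edge: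
  assumes "x \<in> X" "y \<in> X" "R x y"
  shows "component_of X R x = component_of X R y"
  using assms by (subst component_of_eq_iff) (auto simp: edge_rel_def)

end

lemma component_of_isolated:
  assumes "x \<in> X" "\<forall>y\<in>X. \<not> R x y"
  shows "component_of X R x = {x}"
proof -
  have "y = x" if "(x, y) \<in> (edge_rel X R)\<^sup>*" for y
    using that by (cases rule: converse_rtranclE) (use assms in \<open>auto simp: edge_rel_def\<close>)
  then show ?thesis using assms(1) by (auto simp: component_of_def)
qed

lemma rtrancl_edge_rel_if_connected:
  assumes "num_comps X R = 1" "x \<in> X" "y \<in> X"
  shows "(x, y) \<in> (edge_rel X R)\<^sup>*"
proof -
  have "card (component_of X R ` X) = 1" using assms(1) by (simp add: num_comps_eq_card_components)
  then obtain C where "component_of X R ` X = {C}" by (meson card_1_singletonE)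
  then have "y \<in> component_of X R x"
    using assms(2,3) mem_component_of_self[OF assms(3)] by (metis image_eqI singletonD)
  then show ?thesis by (simp add: component_of_def)
qed

lemma rtrancl_leaves_set:
  assumes "(x, y) \<in> r\<^sup>*" "x \<in> Y" "y \<notin> Y"
  shows "\<exists>a b. (a, b) \<in> r \<and> a \<in> Y \<and> b \<notin> Y"
  using assms by (induction rule: rtrancl_induct) auto

lemma connected_edge_leaving:
  assumes "num_comps X R = 1" "x \<in> Y" "y \<in> X - Y" "Y \<subseteq> X"
  shows "\<exists>a\<in>Y. \<exists>b\<in>X - Y. R a b"
proof -
  have "(x, y) \<in> (edge_rel X R)\<^sup>*" using rtrancl_edge_rel_if_connected[OF assms(1)] assms(2-4) by blast
  then obtain a b where "(a, b) \<in> edge_rel X R" "a \<in> Y" "b \<notin> Y"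
    using rtrancl_leaves_set assms(2,3) by (metis DiffD2)
  then show ?thesis by (auto simp: edge_rel_def)
qed

lemma component_of_other_if_num_comps_ne_1:
  assumes "num_comps X R \<noteq> 1" "x \<in> X"
  shows "\<exists>y\<in>X. component_of X R y \<noteq> component_of X R x"
proof (rule ccontr)
  assume "\<not> ?thesis"
  then have "component_of X R ` X = {component_of X R x}" using assms(2) by blast
  then show False using assms(1) by (simp add: num_comps_eq_card_components)
qed

lemma card_image_insert_add_card_fiber_le:
  assumes "finite S"
  shows "card (insert t (g ` S)) + card {s \<in> S. g s = t} \<le> card S + 1"
proof -
  let ?T = "{s \<in> S. g s = t}"
  have "insert t (g ` S) = insert t (g ` (S - ?T))" by auto
  then have "card (insert t (g ` S)) \<le> card (g ` (S - ?T)) + 1"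
    using assms by (simp add: card_insert_if)
  also have "\<dots> \<le> card (S - ?T) + 1" using assms card_image_le by auto
  also have "card (S - ?T) = card S - card ?T" using assms by (simp add: card_Diff_subset)
  finally show ?thesis using assms card_mono[of S ?T] by auto
qed

text \<open>Passing from the partition of \<open>A\<close> by \<open>k\<close> to the coarser one by \<open>h\<close>, the class \<open>t\<close>
  absorbs all the \<open>k\<close>-classes it contains.\<close>
lemma card_image_coarsening_le:
  assumes "finite A" and refines: "\<And>x y. x \<in> A \<Longrightarrow> y \<in> A \<Longrightarrow> k x = k y \<Longrightarrow> h x = h y"
  shows "card (insert t (h ` A)) + card (k ` {x \<in> A. h x = t}) \<le> card (k ` A) + 1"
proof -
  define g where "g C = h (SOME x. x \<in> A \<and> k x = C)" for C
  have g: "g (k x) = h x" if "x \<in> A" for x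
  proof -
    have "\<exists>y. y \<in> A \<and> k y = k x" using that by blast
    then have "(SOME y. y \<in> A \<and> k y = k x) \<in> A \<and> k (SOME y. y \<in> A \<and> k y = k x) = k x"
      by (rule someI_ex)
    then show ?thesis using refines that unfolding g_def by metis
  qed
  have "h ` A = g ` (k ` A)" using g by (auto simp: image_image)
  moreover have "card (k ` {x \<in> A. h x = t}) \<le> card {C \<in> k ` A. g C = t}"
    using g assms(1) by (intro card_mono) auto
  moreover have "card (insert t (g ` (k ` A))) + card {C \<in> k ` A. g C = t} \<le> card (k ` A) + 1"
    using assms(1) by (intro card_image_insert_add_card_fiber_le) auto
  ultimately show ?thesis by simp
qed

lemma card_Un_add_one_le:
  assumes "finite X" "finite Y" "X \<inter> Y \<noteq> {}"
  shows "card (X \<union> Y) + 1 \<le> card X + card Y"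
proof -
  have "card (X \<inter> Y) \<ge> 1" using assms by (simp add: Suc_leI card_gt_0_iff)
  then show ?thesis using card_Un_Int[OF assms(1,2)] by linarith
qed

text \<open>Grow a connected subset of \<open>B\<close> one vertex at a time: each new \<open>M b\<close> meets the union built so
  far, which costs at least one element.\<close>
lemma card_UN_connected_le:
  assumes "finite B" "num_comps B R = 1"
    and meet: "\<And>a b. a \<in> B \<Longrightarrow> b \<in> B \<Longrightarrow> R a b \<Longrightarrow> M a \<inter> M b \<noteq> {}"
    and "\<And>b. finite (M b)"
  shows "card (\<Union>(M ` B)) + card B \<le> (\<Sum>b\<in>B. card (M b)) + 1"
proof -
  let ?P = "\<lambda>X. card (\<Union>(M ` X)) + card X \<le> (\<Sum>b\<in>X. card (M b)) + 1"
  have "B \<noteq> {}" using assms(2) by (auto simp: num_comps_eq_card_components)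
  then have "1 \<le> card B" using assms(1) by (simp add: Suc_leI card_gt_0_iff)
  have "\<exists>X\<subseteq>B. card X = n \<and> ?P X" if "1 \<le> n" "n \<le> card B" for n
    using that
  proof (induction n rule: nat_induct_at_least)
    case base
    then obtain b where "b \<in> B" by fastforce
    then show ?case by (intro exI[of _ "{b}"]) auto
  next
    case (Suc n)
    then obtain X where X: "X \<subseteq> B" "card X = n" "?P X" by auto
    have "finite X" using X(1) assms(1) finite_subset by blast
    obtain x where "x \<in> X" using X(2) Suc.hyps by fastforce
    have "X \<noteq> B" using X(2) Suc.prems by auto
    then obtain y where "y \<in> B - X" using X(1) by blast
    obtain a b where ab: "a \<in> X" "b \<in> B - X" "R a b"
      using connected_edge_leaving[OF assms(2) \<open>x \<in> X\<close> \<open>y \<in> B - X\<close> X(1)] by blast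
    have "M b \<inter> \<Union>(M ` X) \<noteq> {}" using meet[of a b] ab X(1) by blast
    then have "card (\<Union>(M ` insert b X)) + 1 \<le> card (M b) + card (\<Union>(M ` X))"
      using card_Un_add_one_le[OF assms(4)] \<open>finite X\<close> assms(4) by simp
    moreover have "(\<Sum>c\<in>insert b X. card (M c)) = card (M b) + (\<Sum>c\<in>X. card (M c))"
      using \<open>finite X\<close> ab(2) by simp
    moreover have "card (insert b X) = Suc n" using \<open>finite X\<close> ab(2) X(2) by simp
    ultimately show ?case using X ab(2) by (intro exI[of _ "insert b X"]) auto
  qed
  then obtain X where X: "X \<subseteq> B" "card X = card B" "?P X" using \<open>1 \<le> card B\<close> by blast
  moreover have "X = B" by (rule card_subset_eq[OF assms(1) X(1,2)])
  ultimately show ?thesis by simp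
qed

lemma min_add_le_add_min:
  fixes x y D :: "'a::linordered_ab_group_add"
  assumes "0 \<le> x" "0 \<le> y" "0 \<le> D"
  shows "min (x + y) D \<le> min x D + min y D"
proof (cases "x \<le> D"; cases "y \<le> D")
  assume "x \<le> D" "y \<le> D"
  then show ?thesis by simp
next
  assume "x \<le> D" "\<not> y \<le> D"
  then show ?thesis using assms(1) by (simp add: min.coboundedI2 add_increasing)
next
  assume "\<not> x \<le> D" "y \<le> D"
  then show ?thesis using assms(2) by (simp add: min.coboundedI2 add_increasing2)
next
  assume "\<not> x \<le> D" "\<not> y \<le> D"
  then show ?thesis using assms(3) by (simp add: min.coboundedI2 add_increasing2)
qed

lemma min_sum_le_sum_min:
  fixes c :: "'b \<Rightarrow> 'a::linordered_ab_group_add"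
  assumes "finite I" "\<And>i. i \<in> I \<Longrightarrow> c i \<ge> 0" "D \<ge> 0"
  shows "min (\<Sum>i\<in>I. c i) D \<le> (\<Sum>i\<in>I. min (c i) D)"
  using assms
proof (induction I rule: finite_induct)
  case (insert a I)
  have "min (c a + (\<Sum>i\<in>I. c i)) D \<le> min (c a) D + min (\<Sum>i\<in>I. c i) D"
    using insert.prems by (intro min_add_le_add_min sum_nonneg) auto
  then show ?case using insert by (simp add: add_left_mono order_trans)
qed simp

lemma mult_of_int_in_Ints_if_denom_dvd:
  assumes "denom x dvd l" shows "x * rat_of_int l \<in> \<int>"
proof -
  obtain a b where q: "quotient_of x = (a, b)" by (cases "quotient_of x") auto
  then obtain c where "l = b * c" using assms by (auto simp: denom_def elim: dvdE)
  moreover have "b \<noteq> 0" using quotient_of_denom_pos[OF q] by simp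
  ultimately have "x * rat_of_int l = of_int (a * c)"
    using quotient_of_div[OF q] by simp
  then show ?thesis by simp
qed

lemma Ints_ge_1_if_pos: "(x::rat) \<in> \<int> \<Longrightarrow> x > 0 \<Longrightarrow> x \<ge> 1"
  by (auto elim!: Ints_cases)

section \<open>The greedy potential argument\<close>

lemma one_minus_inverse_power_le_exp:
  fixes k :: real
  assumes "k \<ge> 1"
  shows "(1 - 1 / k) ^ n \<le> exp (- real n / k)"
proof -
  have "0 \<le> 1 - 1 / k" using assms by (simp add: field_simps)
  moreover have "1 - 1 / k \<le> exp (- (1 / k))" using exp_ge_add_one_self[of "- (1 / k)"] by simp
  ultimately have "(1 - 1 / k) ^ n \<le> exp (- (1 / k)) ^ n" by (intro power_mono)
  also have "\<dots> = exp (- real n / k)" by (simp flip: exp_of_nat_mult)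
  finally show ?thesis .
qed

lemma geometric_decay_steps_bound:
  fixes k A :: real
  assumes "k \<ge> 1" "A > 0" "k < k * A * (1 - 1 / k) ^ n"
  shows "real n < k * ln A"
proof -
  have "k < k * A * exp (- real n / k)"
    using assms one_minus_inverse_power_le_exp[OF assms(1), of n]
    by (smt (verit) mult_left_mono mult_pos_pos)
  then have "exp (real n / k) < A * exp (- real n / k) * exp (real n / k)"
    using assms(1) by simp
  also have "\<dots> = A" by (simp add: exp_minus field_simps)
  finally have "real n / k < ln A" using assms(2) by (metis exp_less_cancel_iff exp_ln)
  then show ?thesis using assms(1) by (simp add: field_simps)
qed

text \<open>Invariant of the greedy analysis for the scaled distance \<open>\<Phi>\<close> to the optimum after \<open>n\<close>
  steps, \<open>k\<close> being the size of a reference solution: as long as \<open>\<Phi> - (k - 1) > k\<close>, this quantity shrinks by the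
  factor \<open>1 - 1/k\<close> per step; afterwards every step still decreases \<open>\<Phi>\<close> by at least \<open>1\<close>.\<close>
definition greedy_potential_bound :: "real \<Rightarrow> real \<Rightarrow> nat \<Rightarrow> real \<Rightarrow> bool" where
  "greedy_potential_bound k A n \<Phi> \<longleftrightarrow>
     (if \<Phi> - (k - 1) > k then \<Phi> - (k - 1) \<le> k * A * (1 - 1 / k) ^ n
      else real n + \<Phi> \<le> k * ln A + 2 * k)"

lemma greedy_potential_bound_start:
  assumes "k \<ge> 1" "A \<ge> 1" "\<Phi> - (k - 1) \<le> k * (A - 1)"
  shows "greedy_potential_bound k A 0 \<Phi>"
proof -
  have "k * ln A \<ge> 0" using assms(1,2) by simp
  moreover have "k * (A - 1) \<le> k * A * (1 - 1 / k) ^ 0" using assms(1) by (simp add: algebra_simps)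
  ultimately show ?thesis unfolding greedy_potential_bound_def using assms(3) by auto
qed

lemma greedy_potential_bound_step:
  assumes k: "k \<ge> 1" and "A \<ge> 1" and d: "d \<ge> 1" and greedy: "\<Phi> - (k - 1) \<le> k * d"
    and bound: "greedy_potential_bound k A n \<Phi>"
  shows "greedy_potential_bound k A (Suc n) (\<Phi> - d)"
proof (cases "\<Phi> - (k - 1) > k")
  case True
  let ?q = "1 - 1 / k"
  have decay: "\<Phi> - (k - 1) \<le> k * A * ?q ^ n" using True bound by (simp add: greedy_potential_bound_def)
  show ?thesis
  proof (cases "\<Phi> - d - (k - 1) > k")
    case True
    have "d \<ge> (\<Phi> - (k - 1)) / k" using greedy k by (simp add: field_simps)
    then have "\<Phi> - d - (k - 1) \<le> (\<Phi> - (k - 1)) * ?q" using k by (simp add: field_simps)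
    also have "\<dots> \<le> k * A * ?q ^ n * ?q" using decay k by (intro mult_right_mono) auto
    finally show ?thesis using True by (simp add: greedy_potential_bound_def mult_ac)
  next
    case False
    have "real n < k * ln A"
      using geometric_decay_steps_bound[OF k _, of A n] decay True \<open>A \<ge> 1\<close> by linarith
    then show ?thesis using False d by (simp add: greedy_potential_bound_def)
  qed
next
  case False
  then show ?thesis using bound d by (simp add: greedy_potential_bound_def)
qed

lemma greedy_potential_bound_final:
  assumes "k \<ge> 1" "greedy_potential_bound k A n 0"
  shows "real n \<le> (2 + ln A) * k"
  using assms by (simp add: greedy_potential_bound_def algebra_simps split: if_splits)

lemma greedy_reach_finite: "greedy_reach f U S \<Longrightarrow> finite S"
  by (induction rule: greedy_reach.induct) auto

lemma greedy_reach_subset: "greedy_reach f U S \<Longrightarrow> S \<subseteq> U"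
  by (induction rule: greedy_reach.induct) auto

lemma greedy_reach_card_le:
  fixes f :: "'a set \<Rightarrow> real"
  assumes reach: "greedy_reach f U S" and "f S = fmax"
    and "k \<ge> 1" "A \<ge> 1"
    and initial: "c * (fmax - f {}) - (k - 1) \<le> k * (A - 1)"
    and best_gain: "\<And>X u. greedy_reach f U X \<Longrightarrow> u \<in> U - X \<Longrightarrow> f (X \<union> {u}) - f X > 0 \<Longrightarrow>
      (\<forall>u' \<in> U - X. f (X \<union> {u'}) - f X \<le> f (X \<union> {u}) - f X) \<Longrightarrow>
      1 \<le> c * (f (X \<union> {u}) - f X) \<and> c * (fmax - f X) - (k - 1) \<le> k * (c * (f (X \<union> {u}) - f X))"
  shows "real (card S) \<le> (2 + ln A) * k"
proof -
  have "greedy_potential_bound k A (card S) (c * (fmax - f S))"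
    using reach
  proof (induction rule: greedy_reach.induct)
    case start
    then show ?case using greedy_potential_bound_start[OF assms(3,4) initial] by simp
  next
    case (step X u)
    have "card (X \<union> {u}) = Suc (card X)"
      using greedy_reach_finite[OF step.hyps(1)] step.hyps(2) by simp
    moreover have "c * (fmax - f (X \<union> {u})) = c * (fmax - f X) - c * (f (X \<union> {u}) - f X)"
      by (simp add: algebra_simps)
    moreover have "1 \<le> c * (f (X \<union> {u}) - f X)"
      and "c * (fmax - f X) - (k - 1) \<le> k * (c * (f (X \<union> {u}) - f X))"
      using best_gain[OF step.hyps] by auto
    ultimately show ?case using greedy_potential_bound_step[OF assms(3,4) _ _ step.IH] by simp
  qed
  then show ?thesis using assms(2,3) greedy_potential_bound_final by simp
qed

section \<open>Connected weighted graphs\<close>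

locale connected_weighted_graph =
  fixes V :: "'a set" and E :: "'a \<Rightarrow> 'a \<Rightarrow> bool" and w :: "'a \<Rightarrow> 'a \<Rightarrow> rat"
  assumes simple: "simple_graph V E" and card_V: "card V \<ge> 2" and connected: "num_comps V E = 1"
    and weight_pos: "\<And>u v. E u v \<Longrightarrow> w u v > 0" and weight_sym: "\<And>u v. w u v = w v u"
begin

abbreviation "N v \<equiv> nbrs V E v"
abbreviation "W v \<equiv> WA V E w V v"
abbreviation "L \<equiv> Lmax V E w"

abbreviation "qgraph A \<equiv> \<lambda>a b. E a b \<and> (a \<in> A \<or> b \<in> A)"
abbreviation "qcomp A \<equiv> component_of V (qgraph A)"
abbreviation "pcomp A \<equiv> component_of A E"

lemma finite_V: "finite V"
  using simple by (simp add: simple_graph_def)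

lemma E_sym: "E u v \<Longrightarrow> E v u"
  using simple by (simp add: simple_graph_def)

lemma E_in_V: "E u v \<Longrightarrow> u \<in> V \<and> v \<in> V"
  using simple by (simp add: simple_graph_def)

lemma E_irrefl: "\<not> E v v"
  using simple by (simp add: simple_graph_def)

lemma qgraph_sym: "qgraph A a b \<Longrightarrow> qgraph A b a"
  using E_sym by blast

lemma nbrs_subset: "N v \<subseteq> V"
  by (auto simp: nbrs_def)

lemma finite_nbrs: "finite (N v)"
  using finite_V nbrs_subset finite_subset by blast

lemma mem_nbrs_iff: "u \<in> N v \<longleftrightarrow> E v u"
  using E_in_V by (auto simp: nbrs_def)

lemma finite_if_subset_V: "A \<subseteq> V \<Longrightarrow> finite A"
  using finite_V finite_subset by blast

lemma has_neighbour:
  assumes "v \<in> V" shows "\<exists>u. E v u"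
proof -
  have "\<not> V \<subseteq> {v}" using card_V card_mono[of "{v}" V] by auto
  then obtain u where "u \<in> V - {v}" by blast
  then show ?thesis
    using connected_edge_leaving[OF connected, of v "{v}" u] assms by auto
qed

lemma WA_nonneg: "WA V E w A v \<ge> 0"
  unfolding WA_def by (intro sum_nonneg) (auto simp: nbrs_def weight_pos less_imp_le)

lemma WA_mono: "A \<subseteq> A' \<Longrightarrow> WA V E w A v \<le> WA V E w A' v"
  unfolding WA_def
  by (intro sum_mono2) (auto simp: nbrs_def weight_pos less_imp_le intro: finite_subset[OF _ finite_nbrs])

lemma W_pos: "v \<in> V \<Longrightarrow> W v > 0"
proof -
  assume "v \<in> V"
  then obtain u where u: "E v u" using has_neighbour by blast
  have "w v u \<le> W v" unfolding WA_def
    using u E_in_V finite_nbrs[of v] weight_pos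
    by (intro member_le_sum) (auto simp: nbrs_def less_imp_le)
  then show ?thesis using weight_pos u by (meson less_le_trans)
qed

lemma WA_insert:
  assumes "b \<notin> A"
  shows "WA V E w (insert b A) v = WA V E w A v + (if E v b then w v b else 0)"
proof -
  have "N v \<inter> insert b A = (if E v b then insert b (N v \<inter> A) else N v \<inter> A)"
    using E_in_V by (auto simp: nbrs_def)
  then show ?thesis unfolding WA_def using assms finite_nbrs[of v]
    by (auto intro: finite_subset)
qed

lemma hA_eq: "hA V E w A v = (if v \<in> A then W v / 2 else min (WA V E w A v) (W v / 2))"
  by (auto simp: hA_def)

lemma hA_mono: "A \<subseteq> A' \<Longrightarrow> hA V E w A v \<le> hA V E w A' v"
  using WA_mono[of A A' v] WA_mono[of A' V v] by (auto simp: hA_eq)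

lemma hA_nonneg: "hA V E w A v \<ge> 0"
  using WA_nonneg[of A v] WA_nonneg[of V v] by (auto simp: hA_eq)

lemma hfun_mono: "A \<subseteq> A' \<Longrightarrow> hfun V E w A \<le> hfun V E w A'"
  unfolding hfun_def by (intro sum_mono hA_mono)

definition dominating :: "'a set \<Rightarrow> bool" where
  "dominating B \<longleftrightarrow> (\<forall>v \<in> V - B. WA V E w B v \<ge> W v / 2)"

lemma is_WPPICDS_iff: "is_WPPICDS V E w B \<longleftrightarrow> B \<subseteq> V \<and> dominating B \<and> num_comps B E = 1"
  by (simp add: is_WPPICDS_def dominating_def)

lemma dominating_has_neighbour:
  assumes "dominating B" "v \<in> V - B"
  shows "\<exists>b\<in>B. E v b"
proof (rule ccontr)
  assume "\<not> ?thesis"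
  then have "WA V E w B v = 0" by (auto simp: WA_def mem_nbrs_iff intro: sum.neutral)
  moreover have "W v / 2 \<le> WA V E w B v" using assms by (auto simp: dominating_def)
  ultimately show False using W_pos[of v] assms(2) by simp
qed

definition qcomps_at :: "'a set \<Rightarrow> 'a \<Rightarrow> nat" where
  "qcomps_at A b = card (qcomp A ` insert b (N b))"

definition pcomps_at :: "'a set \<Rightarrow> 'a \<Rightarrow> nat" where
  "pcomps_at A b = card (pcomp A ` (N b \<inter> A))"

definition comp_gain :: "'a set \<Rightarrow> 'a \<Rightarrow> int" where
  "comp_gain A b = int (qfun V E A) + int (pfun V E A) - int (qfun V E (insert b A)) - int (pfun V E (insert b A))"

lemma qcomp_eq_iff:
  "x \<in> V \<Longrightarrow> y \<in> V \<Longrightarrow> qcomp A x = qcomp A y \<longleftrightarrow> (x, y) \<in> (edge_rel V (qgraph A))\<^sup>*"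
  by (rule component_of_eq_iff[where R = "qgraph A", OF qgraph_sym])

lemma pcomp_eq_iff:
  "x \<in> A \<Longrightarrow> y \<in> A \<Longrightarrow> pcomp A x = pcomp A y \<longleftrightarrow> (x, y) \<in> (edge_rel A E)\<^sup>*"
  by (rule component_of_eq_iff[where R = E, OF E_sym])

lemma qcomp_eq_if_edge: "E x y \<Longrightarrow> x \<in> A \<or> y \<in> A \<Longrightarrow> qcomp A x = qcomp A y"
  using component_of_eq_if_edge[where R = "qgraph A", OF qgraph_sym] E_in_V by blast

lemma pcomp_eq_if_edge: "E x y \<Longrightarrow> x \<in> A \<Longrightarrow> y \<in> A \<Longrightarrow> pcomp A x = pcomp A y"
  using component_of_eq_if_edge[where R = E, OF E_sym] by blast

lemma qcomp_eq_if_qcomp_insert_eq: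
  assumes "x \<in> V" "y \<in> V" "qcomp A x = qcomp A y"
  shows "qcomp (insert b A) x = qcomp (insert b A) y"
proof -
  have "(x, y) \<in> (edge_rel V (qgraph A))\<^sup>*" using assms qcomp_eq_iff by blast
  then have "(x, y) \<in> (edge_rel V (qgraph (insert b A)))\<^sup>*" by (rule edge_rel_rtrancl_mono[rotated 2]) auto
  then show ?thesis using assms(1,2) qcomp_eq_iff by blast
qed

lemma qfun_insert_add_qcomps_at_le:
  assumes "b \<in> V"
  shows "qfun V E (insert b A) + qcomps_at A b \<le> qfun V E A + 1"
proof -
  let ?h = "qcomp (insert b A)"
  have "insert b (N b) \<subseteq> {x \<in> V. ?h x = ?h b}"
    using assms qcomp_eq_if_edge[of b _ "insert b A"] nbrs_subset mem_nbrs_iff by auto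
  then have "qcomps_at A b \<le> card (qcomp A ` {x \<in> V. ?h x = ?h b})"
    unfolding qcomps_at_def using finite_V by (intro card_mono) auto
  moreover have "card (insert (?h b) (?h ` V)) + card (qcomp A ` {x \<in> V. ?h x = ?h b}) \<le> card (qcomp A ` V) + 1"
    using finite_V qcomp_eq_if_qcomp_insert_eq by (rule card_image_coarsening_le)
  moreover have "insert (?h b) (?h ` V) = ?h ` V" using assms by auto
  ultimately show ?thesis unfolding qfun_def num_comps_eq_card_components by simp
qed

lemma pcomp_eq_if_pcomp_insert_eq:
  assumes "x \<in> A" "y \<in> A" "pcomp A x = pcomp A y"
  shows "pcomp (insert b A) x = pcomp (insert b A) y"
proof -
  have "(x, y) \<in> (edge_rel A E)\<^sup>*" using assms pcomp_eq_iff by blast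
  then have "(x, y) \<in> (edge_rel (insert b A) E)\<^sup>*" by (rule edge_rel_rtrancl_mono[rotated 2]) auto
  then show ?thesis using assms(1,2) pcomp_eq_iff by blast
qed

lemma pfun_insert_add_pcomps_at_le:
  assumes "finite A"
  shows "pfun V E (insert b A) + pcomps_at A b \<le> pfun V E A + 1"
proof -
  let ?h = "pcomp (insert b A)"
  have "N b \<inter> A \<subseteq> {x \<in> A. ?h x = ?h b}"
    using pcomp_eq_if_edge[of b _ "insert b A"] mem_nbrs_iff by auto
  then have "pcomps_at A b \<le> card (pcomp A ` {x \<in> A. ?h x = ?h b})"
    unfolding pcomps_at_def using assms by (intro card_mono) auto
  moreover have "card (insert (?h b) (?h ` A)) + card (pcomp A ` {x \<in> A. ?h x = ?h b}) \<le> card (pcomp A ` A) + 1"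
    using assms pcomp_eq_if_pcomp_insert_eq by (rule card_image_coarsening_le)
  ultimately show ?thesis unfolding pfun_def num_comps_eq_card_components by simp
qed

lemma comp_gain_ge:
  assumes "b \<in> V" "A \<subseteq> V"
  shows "comp_gain A b \<ge> int (qcomps_at A b) + int (pcomps_at A b) - 2"
  using qfun_insert_add_qcomps_at_le[OF assms(1), of A]
    pfun_insert_add_pcomps_at_le[OF finite_if_subset_V[OF assms(2)], of b]
  unfolding comp_gain_def by linarith

lemma qcomps_at_pos: "qcomps_at A b \<ge> 1"
  unfolding qcomps_at_def using finite_nbrs by (simp add: Suc_leI card_gt_0_iff)

text \<open>Without neighbours in \<open>A\<close>, the vertex \<open>b\<close> is a \<open>q\<close>-component of its own, distinct from that
  of any neighbour.\<close>
lemma comp_gain_nonneg: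
  assumes "b \<in> V - A" "A \<subseteq> V"
  shows "comp_gain A b \<ge> 0"
proof (cases "pcomps_at A b = 0")
  case False
  then show ?thesis using comp_gain_ge[OF _ assms(2), of b] assms(1) qcomps_at_pos[of A b] by simp
next
  case True
  then have "N b \<inter> A = {}"
    using finite_if_subset_V[OF assms(2)] by (simp add: pcomps_at_def)
  then have "\<forall>y\<in>V. \<not> qgraph A b y" using assms(1) mem_nbrs_iff by blast
  then have b_alone: "qcomp A b = {b}" using assms(1) by (intro component_of_isolated) auto
  obtain u where u: "E b u" using has_neighbour assms(1) by blast
  then have "u \<in> qcomp A u" "u \<noteq> b" using mem_component_of_self[of u V] E_in_V E_irrefl by auto
  then have "qcomp A u \<noteq> qcomp A b" using b_alone by blast
  then have two: "card {qcomp A u, qcomp A b} = 2" by simp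
  have "{qcomp A u, qcomp A b} \<subseteq> qcomp A ` insert b (N b)" using u mem_nbrs_iff by auto
  then have "card {qcomp A u, qcomp A b} \<le> qcomps_at A b"
    unfolding qcomps_at_def using finite_nbrs by (intro card_mono) auto
  with two have "qcomps_at A b \<ge> 2" by simp
  then show ?thesis using comp_gain_ge[OF _ assms(2), of b] assms(1) by simp
qed

lemma qcomps_at_eq_1_if_mem:
  assumes "b \<in> A"
  shows "qcomps_at A b = 1"
proof -
  have "qcomp A x = qcomp A b" if "x \<in> N b" for x
    using that assms qcomp_eq_if_edge[of b x A] by (simp add: mem_nbrs_iff)
  then have "qcomp A ` insert b (N b) = {qcomp A b}" by blast
  then show ?thesis unfolding qcomps_at_def by (simp only: is_singletonI is_singleton_altdef[symmetric])
qed

lemma UN_qcomp_closed_nbhds_eq: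
  assumes "B \<subseteq> V" "dominating B"
  shows "(\<Union>b\<in>B. qcomp A ` insert b (N b)) = qcomp A ` V"
proof
  show "(\<Union>b\<in>B. qcomp A ` insert b (N b)) \<subseteq> qcomp A ` V" using assms(1) nbrs_subset by auto
  show "qcomp A ` V \<subseteq> (\<Union>b\<in>B. qcomp A ` insert b (N b))"
  proof
    fix C assume "C \<in> qcomp A ` V"
    then obtain v where v: "v \<in> V" "C = qcomp A v" by blast
    show "C \<in> (\<Union>b\<in>B. qcomp A ` insert b (N b))"
    proof (cases "v \<in> B")
      case True
      then show ?thesis using v(2) by blast
    next
      case False
      then obtain b where "b \<in> B" "E v b" using dominating_has_neighbour[OF assms(2)] v(1) by blast
      then have "v \<in> N b" by (simp add: mem_nbrs_iff E_sym)
      then show ?thesis using v(2) \<open>b \<in> B\<close> by blast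
    qed
  qed
qed

lemma qfun_le_sum_qcomps_at:
  assumes "A \<subseteq> V" "is_WPPICDS V E w B"
  shows "qfun V E A + card (B - A) \<le> (\<Sum>b\<in>B - A. qcomps_at A b) + 1"
proof -
  let ?M = "\<lambda>b. qcomp A ` insert b (N b)"
  have B: "B \<subseteq> V" "dominating B" "num_comps B E = 1" using assms(2) by (auto simp: is_WPPICDS_iff)
  have "finite B" using B(1) by (rule finite_if_subset_V)
  have "card (\<Union>(?M ` B)) + card B \<le> (\<Sum>b\<in>B. card (?M b)) + 1"
  proof (rule card_UN_connected_le[OF \<open>finite B\<close> B(3)])
    fix a b assume "a \<in> B" "b \<in> B" "E a b"
    then have "qcomp A b \<in> ?M a \<inter> ?M b" using mem_nbrs_iff by auto
    then show "?M a \<inter> ?M b \<noteq> {}" by blast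
  qed (simp add: finite_nbrs)
  moreover have "card (\<Union>(?M ` B)) = qfun V E A"
    using UN_qcomp_closed_nbhds_eq[OF B(1,2)] by (simp add: qfun_def num_comps_eq_card_components)
  moreover have "(\<Sum>b\<in>B. qcomps_at A b) = (\<Sum>b\<in>B - A. qcomps_at A b) + card (B \<inter> A)"
    using sum.Int_Diff[OF \<open>finite B\<close>, of "qcomps_at A" A] by (simp add: qcomps_at_eq_1_if_mem)
  moreover have "card B = card (B - A) + card (B \<inter> A)"
    using card_Int_Diff[OF \<open>finite B\<close>, of A] by simp
  ultimately show ?thesis unfolding qcomps_at_def by linarith
qed

lemma pfun_le_sum_pcomps_at:
  assumes "A \<subseteq> V" "B \<subseteq> V" "dominating B"
  shows "pfun V E A \<le> (\<Sum>b\<in>B - A. pcomps_at A b) + card (B \<inter> A)"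
proof -
  have "finite A" "finite B" using assms(1,2) by (simp_all add: finite_if_subset_V)
  have "pcomp A ` A \<subseteq> (\<Union>b\<in>B - A. pcomp A ` (N b \<inter> A)) \<union> pcomp A ` (B \<inter> A)"
  proof
    fix C assume "C \<in> pcomp A ` A"
    then obtain x where x: "x \<in> A" "C = pcomp A x" by blast
    show "C \<in> (\<Union>b\<in>B - A. pcomp A ` (N b \<inter> A)) \<union> pcomp A ` (B \<inter> A)"
    proof (cases "x \<in> B")
      case False
      then obtain b where b: "b \<in> B" "E x b" using dominating_has_neighbour[OF assms(3)] x assms(1) by blast
      show ?thesis
      proof (cases "b \<in> A")
        case True
        then have "pcomp A x = pcomp A b" using pcomp_eq_if_edge x b by blast
        then show ?thesis using x b True by auto
      next
        case False
        then have "x \<in> N b \<inter> A" using x b E_sym mem_nbrs_iff by auto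
        then show ?thesis using x b False by auto
      qed
    qed (use x in auto)
  qed
  then have "pfun V E A \<le> card ((\<Union>b\<in>B - A. pcomp A ` (N b \<inter> A)) \<union> pcomp A ` (B \<inter> A))"
    unfolding pfun_def num_comps_eq_card_components using \<open>finite A\<close> \<open>finite B\<close> by (intro card_mono) auto
  also have "\<dots> \<le> card (\<Union>b\<in>B - A. pcomp A ` (N b \<inter> A)) + card (pcomp A ` (B \<inter> A))"
    by (rule card_Un_le)
  also have "\<dots> \<le> (\<Sum>b\<in>B - A. pcomps_at A b) + card (B \<inter> A)"
    unfolding pcomps_at_def
    using card_UN_le[of "B - A" "\<lambda>b. pcomp A ` (N b \<inter> A)"] \<open>finite B\<close> card_image_le[of "B \<inter> A" "pcomp A"]
    by (simp add: add_mono)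
  finally show ?thesis .
qed

lemma comp_deficit_le_sum_comp_gain:
  assumes "A \<subseteq> V" "is_WPPICDS V E w B"
  shows "int (qfun V E A) + int (pfun V E A) - 1 - int (card B) \<le> (\<Sum>b\<in>B - A. comp_gain A b)"
proof -
  have B: "B \<subseteq> V" "dominating B" using assms(2) by (auto simp: is_WPPICDS_iff)
  have "finite B" using B(1) by (rule finite_if_subset_V)
  have "(\<Sum>b\<in>B - A. int (qcomps_at A b) + int (pcomps_at A b) - 2) \<le> (\<Sum>b\<in>B - A. comp_gain A b)"
    using B(1) assms(1) by (intro sum_mono comp_gain_ge) auto
  moreover have "(\<Sum>b\<in>B - A. int (qcomps_at A b) + int (pcomps_at A b) - 2)
      = int (\<Sum>b\<in>B - A. qcomps_at A b) + int (\<Sum>b\<in>B - A. pcomps_at A b) - 2 * int (card (B - A))"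
    by (simp add: sum.distrib sum_subtractf)
  moreover have "card B = card (B - A) + card (B \<inter> A)"
    using card_Int_Diff[OF \<open>finite B\<close>, of A] by simp
  ultimately show ?thesis
    using qfun_le_sum_qcomps_at[OF assms] pfun_le_sum_pcomps_at[OF assms(1) B] by linarith
qed

lemma WA_eq_sum_if_edge: "finite X \<Longrightarrow> WA V E w X v = (\<Sum>b\<in>X. if E v b then w v b else 0)"
  unfolding WA_def by (simp add: sum.inter_restrict Int_commute mem_nbrs_iff)

lemma hA_insert_gain_eq_min:
  assumes "v \<notin> insert b A" "b \<notin> A" "WA V E w A v < W v / 2"
  shows "hA V E w (insert b A) v - hA V E w A v
    = min (if E v b then w v b else 0) (W v / 2 - WA V E w A v)"
  using assms WA_insert[OF assms(2), of v] by (auto simp: hA_eq min_def)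

text \<open>Submodularity of the capped coverage \<open>min (WA V E w A v) (W v / 2)\<close>.\<close>
lemma hA_deficit_le_sum_gains:
  assumes "B \<subseteq> V" "dominating B" "v \<in> V"
  shows "W v / 2 - hA V E w A v \<le> (\<Sum>b\<in>B - A. hA V E w (insert b A) v - hA V E w A v)"
proof -
  have "finite B" using assms(1) by (rule finite_if_subset_V)
  have gains_nonneg: "\<forall>b\<in>B - A. hA V E w (insert b A) v - hA V E w A v \<ge> 0"
    using hA_mono[of A] by (simp add: subset_insertI)
  show ?thesis
  proof (cases "v \<notin> A \<and> WA V E w A v < W v / 2")
    case False
    then have "W v / 2 - hA V E w A v = 0" by (auto simp: hA_def)
    moreover have "0 \<le> (\<Sum>b\<in>B - A. hA V E w (insert b A) v - hA V E w A v)"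
      using gains_nonneg by (intro sum_nonneg) blast
    ultimately show ?thesis by simp
  next
    case True
    then have v: "v \<notin> A" "hA V E w A v = WA V E w A v" "WA V E w A v < W v / 2"
      by (auto simp: hA_def)
    show ?thesis
    proof (cases "v \<in> B")
      case True
      then have "W v / 2 - hA V E w A v = hA V E w (insert v A) v - hA V E w A v"
        by (simp add: hA_def)
      also have "\<dots> \<le> (\<Sum>b\<in>B - A. hA V E w (insert b A) v - hA V E w A v)"
        using True v(1) gains_nonneg \<open>finite B\<close> by (intro member_le_sum) auto
      finally show ?thesis .
    next
      case False
      let ?c = "\<lambda>b. if E v b then w v b else 0"
      let ?D = "W v / 2 - WA V E w A v"
      have "W v / 2 \<le> WA V E w B v" using assms(2,3) False by (auto simp: dominating_def)
      also have "\<dots> = WA V E w (B \<inter> A) v + (\<Sum>b\<in>B - A. ?c b)"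
        using \<open>finite B\<close> by (simp add: WA_eq_sum_if_edge sum.Int_Diff)
      finally have "?D \<le> (\<Sum>b\<in>B - A. ?c b)"
        using WA_mono[of "B \<inter> A" A v] by simp
      then have "W v / 2 - hA V E w A v = min (\<Sum>b\<in>B - A. ?c b) ?D" using v(2) by simp
      also have "\<dots> \<le> (\<Sum>b\<in>B - A. min (?c b) ?D)"
        using \<open>finite B\<close> v(3) weight_pos by (intro min_sum_le_sum_min) (auto simp: less_imp_le)
      also have "\<dots> = (\<Sum>b\<in>B - A. hA V E w (insert b A) v - hA V E w A v)"
      proof (rule sum.cong[OF refl])
        fix b assume "b \<in> B - A"
        then have "v \<notin> insert b A" using False v(1) by blast
        then show "min (?c b) ?D = hA V E w (insert b A) v - hA V E w A v"
          using hA_insert_gain_eq_min[of v b A] \<open>b \<in> B - A\<close> v(3) by simp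
      qed
      finally show ?thesis .
    qed
  qed
qed

definition hmax :: rat where
  "hmax = (\<Sum>v\<in>V. W v / 2)"

lemma hfun_deficit_le_sum_gains:
  assumes "B \<subseteq> V" "dominating B"
  shows "hmax - hfun V E w A \<le> (\<Sum>b\<in>B - A. hfun V E w (insert b A) - hfun V E w A)"
proof -
  have "hmax - hfun V E w A = (\<Sum>v\<in>V. W v / 2 - hA V E w A v)"
    unfolding hmax_def hfun_def by (rule sum_subtractf[symmetric])
  also have "\<dots> \<le> (\<Sum>v\<in>V. \<Sum>b\<in>B - A. hA V E w (insert b A) v - hA V E w A v)"
    using assms by (intro sum_mono hA_deficit_le_sum_gains)
  also have "\<dots> = (\<Sum>b\<in>B - A. hfun V E w (insert b A) - hfun V E w A)"
    unfolding hfun_def by (subst sum.swap) (simp only: sum_subtractf)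
  finally show ?thesis .
qed

subsection \<open>Increments of \<open>f\<close>\<close>

lemma lv_pos: "lv V E w v \<ge> 1"
proof -
  let ?D = "insert (denom (W v / 2)) ((\<lambda>u. denom (w v u)) ` N v)"
  have "denom x \<noteq> 0" for x using quotient_of_denom_pos'[of x] by (simp add: denom_def)
  then have "0 \<notin> ?D" by auto
  then have "Lcm ?D \<noteq> 0" using Lcm_0_iff[of ?D] finite_nbrs by simp
  moreover have "Lcm ?D \<ge> 0" by (rule Lcm_int_greater_eq_0)
  ultimately show ?thesis unfolding lv_def by linarith
qed

lemma lv_le_Lmax: "v \<in> V \<Longrightarrow> lv V E w v \<le> L"
  unfolding Lmax_def using finite_V by (intro Max_ge) auto

lemma Lmax_pos: "L \<ge> 1"
proof -
  have "V \<noteq> {}" using card_V by auto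
  then obtain v where "v \<in> V" by blast
  then show ?thesis using lv_pos[of v] lv_le_Lmax[of v] by linarith
qed

definition fmax :: real where
  "fmax = real_of_rat hmax + (real (card V) - 2) / real_of_int L"

lemma ffun_gain_eq:
  "ffun V E w (insert b A) - ffun V E w A =
     real_of_rat (hfun V E w (insert b A) - hfun V E w A) + real_of_int (comp_gain A b) / real_of_int L"
  unfolding ffun_def cfun_def comp_gain_def of_rat_diff by (simp add: diff_divide_distrib add_divide_distrib)

lemma fmax_minus_ffun_eq:
  "fmax - ffun V E w A =
     real_of_rat (hmax - hfun V E w A) + (real (qfun V E A) + real (pfun V E A) - 2) / real_of_int L"
  unfolding fmax_def ffun_def cfun_def of_rat_diff by (simp add: diff_divide_distrib add_divide_distrib)

lemma scaled_deficit_le_sum_gains: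
  assumes "A \<subseteq> V" "is_WPPICDS V E w B"
  shows "real_of_int L * (fmax - ffun V E w A) - (real (card B) - 1)
    \<le> (\<Sum>b\<in>B - A. real_of_int L * (ffun V E w (insert b A) - ffun V E w A))"
proof -
  let ?hgain = "\<lambda>b. real_of_rat (hfun V E w (insert b A) - hfun V E w A)"
  have "L > 0" using Lmax_pos by simp
  have B: "B \<subseteq> V" "dominating B" using assms(2) by (auto simp: is_WPPICDS_iff)
  have "real_of_rat (hmax - hfun V E w A) \<le> (\<Sum>b\<in>B - A. ?hgain b)"
    using hfun_deficit_le_sum_gains[OF B, of A] by (simp add: of_rat_less_eq flip: of_rat_sum)
  then have h: "real_of_int L * real_of_rat (hmax - hfun V E w A) \<le> (\<Sum>b\<in>B - A. real_of_int L * ?hgain b)"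
    unfolding sum_distrib_left[symmetric] using \<open>L > 0\<close> by (intro mult_left_mono) auto
  have c: "real (qfun V E A) + real (pfun V E A) - 1 - real (card B) \<le> (\<Sum>b\<in>B - A. real_of_int (comp_gain A b))"
    using comp_deficit_le_sum_comp_gain[OF assms] by (simp flip: of_int_sum of_int_le_iff)
  have "real_of_int L * (fmax - ffun V E w A)
      = real_of_int L * real_of_rat (hmax - hfun V E w A) + (real (qfun V E A) + real (pfun V E A) - 2)"
    using \<open>L > 0\<close> by (simp add: fmax_minus_ffun_eq distrib_left)
  moreover have "(\<Sum>b\<in>B - A. real_of_int L * (ffun V E w (insert b A) - ffun V E w A))
      = (\<Sum>b\<in>B - A. real_of_int L * ?hgain b) + (\<Sum>b\<in>B - A. real_of_int (comp_gain A b))"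
    using \<open>L > 0\<close> by (simp add: ffun_gain_eq distrib_left sum.distrib)
  ultimately show ?thesis using h c by linarith
qed

lemma hA_mult_lv_in_Ints: "hA V E w A v * rat_of_int (lv V E w v) \<in> \<int>"
proof -
  let ?D = "insert (denom (W v / 2)) ((\<lambda>u. denom (w v u)) ` N v)"
  have "W v / 2 * rat_of_int (Lcm ?D) \<in> \<int>"
    by (intro mult_of_int_in_Ints_if_denom_dvd dvd_Lcm) simp
  moreover have "WA V E w A v * rat_of_int (Lcm ?D) \<in> \<int>"
    unfolding WA_def sum_distrib_right
    by (intro Ints_sum mult_of_int_in_Ints_if_denom_dvd dvd_Lcm) auto
  ultimately show ?thesis by (auto simp: hA_def lv_def)
qed

text \<open>All values of \<open>h\<close> at a vertex \<open>v\<close> are multiples of \<open>1 / lv v\<close>, so a positive gain is at least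
  \<open>1 / L\<close>.\<close>
lemma hfun_gain_ge_inverse_Lmax:
  assumes "A \<subseteq> A'" "hfun V E w A' - hfun V E w A > 0"
  shows "hfun V E w A' - hfun V E w A \<ge> 1 / rat_of_int L"
proof -
  define d where "d v = hA V E w A' v - hA V E w A v" for v
  have "d v \<ge> 0" for v using hA_mono[OF assms(1)] by (simp add: d_def)
  have sum: "hfun V E w A' - hfun V E w A = (\<Sum>v\<in>V. d v)"
    by (simp add: hfun_def d_def sum_subtractf)
  then obtain v where v: "v \<in> V" "d v > 0"
    using assms(2) by (metis not_le sum_nonpos)
  have lv: "rat_of_int (lv V E w v) > 0" using lv_pos[of v] by simp
  have "d v * rat_of_int (lv V E w v) \<in> \<int>"
    using Ints_diff[OF hA_mult_lv_in_Ints hA_mult_lv_in_Ints] by (simp add: d_def left_diff_distrib)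
  then have "d v * rat_of_int (lv V E w v) \<ge> 1" using v(2) lv by (intro Ints_ge_1_if_pos) auto
  then have "d v \<ge> 1 / rat_of_int (lv V E w v)" using lv by (simp add: field_simps)
  moreover have "1 / rat_of_int (lv V E w v) \<ge> 1 / rat_of_int L"
    using lv_le_Lmax[OF v(1)] lv by (simp add: frac_le)
  moreover have "(\<Sum>v\<in>V. d v) \<ge> d v"
    using v(1) \<open>\<And>v. d v \<ge> 0\<close> finite_V by (intro member_le_sum) auto
  ultimately show ?thesis using sum by linarith
qed

lemma ffun_gain_pos_iff:
  assumes "b \<in> V - X" "X \<subseteq> V"
  shows "ffun V E w (insert b X) - ffun V E w X > 0
    \<longleftrightarrow> hfun V E w (insert b X) - hfun V E w X > 0 \<or> comp_gain X b > 0"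
proof -
  let ?dh = "hfun V E w (insert b X) - hfun V E w X"
  have "L > 0" using Lmax_pos by simp
  have "?dh \<ge> 0" using hfun_mono[of X "insert b X"] by auto
  then have "real_of_rat ?dh \<ge> 0" "real_of_rat ?dh > 0 \<longleftrightarrow> ?dh > 0"
    by (simp_all add: zero_le_of_rat_iff zero_less_of_rat_iff)
  moreover have "real_of_int (comp_gain X b) / real_of_int L \<ge> 0"
    and "real_of_int (comp_gain X b) / real_of_int L > 0 \<longleftrightarrow> comp_gain X b > 0"
    using comp_gain_nonneg[OF assms] \<open>L > 0\<close> by (simp_all add: zero_less_divide_iff)
  ultimately show ?thesis unfolding ffun_gain_eq by linarith
qed

lemma scaled_ffun_gain_ge_1:
  assumes "b \<in> V - X" "X \<subseteq> V" "ffun V E w (insert b X) - ffun V E w X > 0"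
  shows "real_of_int L * (ffun V E w (insert b X) - ffun V E w X) \<ge> 1"
proof -
  let ?dh = "hfun V E w (insert b X) - hfun V E w X"
  have "L > 0" using Lmax_pos by simp
  have "?dh \<ge> 0" using hfun_mono[of X "insert b X"] by auto
  have scaled: "real_of_int L * (ffun V E w (insert b X) - ffun V E w X)
      = real_of_int L * real_of_rat ?dh + real_of_int (comp_gain X b)"
    using \<open>L > 0\<close> by (simp add: ffun_gain_eq distrib_left)
  show ?thesis
  proof (cases "comp_gain X b > 0")
    case True
    then have "real_of_int (comp_gain X b) \<ge> 1" by simp
    moreover have "real_of_int L * real_of_rat ?dh \<ge> 0"
      using \<open>L > 0\<close> \<open>?dh \<ge> 0\<close> by (simp add: zero_le_of_rat_iff)
    ultimately show ?thesis using scaled by linarith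
  next
    case False
    then have "comp_gain X b = 0" using comp_gain_nonneg[OF assms(1,2)] by simp
    moreover have "?dh > 0" using False ffun_gain_pos_iff[OF assms(1,2)] assms(3) by simp
    then have "?dh \<ge> 1 / rat_of_int L" by (intro hfun_gain_ge_inverse_Lmax) auto
    then have "real_of_rat (1 / rat_of_int L) \<le> real_of_rat ?dh" by (simp only: of_rat_less_eq)
    then have "real_of_rat ?dh \<ge> 1 / real_of_int L" by (simp add: of_rat_divide)
    ultimately show ?thesis using scaled \<open>L > 0\<close> by (simp add: field_simps)
  qed
qed

subsection \<open>The greedy output\<close>

lemma greedy_output_no_gain:
  assumes "greedy_output (ffun V E w) V S" "u \<in> V - S"
  shows "\<not> ffun V E w (insert u S) - ffun V E w S > 0"
  using assms by (auto simp: greedy_output_def)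

lemma greedy_output_subset: "greedy_output (ffun V E w) V S \<Longrightarrow> S \<subseteq> V"
  by (auto simp: greedy_output_def dest: greedy_reach_subset)

lemma greedy_output_dominating:
  assumes "greedy_output (ffun V E w) V S"
  shows "dominating S"
  unfolding dominating_def
proof (rule ccontr)
  assume "\<not> (\<forall>v\<in>V - S. W v / 2 \<le> WA V E w S v)"
  then obtain v where v: "v \<in> V - S" "WA V E w S v < W v / 2" by auto
  have "hA V E w S v < hA V E w (insert v S) v" using v by (simp add: hA_def)
  moreover have "hA V E w S x \<le> hA V E w (insert v S) x" for x by (rule hA_mono) auto
  ultimately have "hfun V E w S < hfun V E w (insert v S)"
    unfolding hfun_def using v(1) finite_V by (intro sum_strict_mono_ex1) auto
  then show False
    using ffun_gain_pos_iff[OF v(1) greedy_output_subset[OF assms]] greedy_output_no_gain[OF assms v(1)]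
    by simp
qed

text \<open>If \<open>A\<close> is dominating but the \<open>q\<close>-graph is disconnected, take an edge of \<open>E\<close> between two
  \<open>q\<close>-components: its endpoints lie outside \<open>A\<close>, and adding one of them merges components.\<close>
lemma comp_gain_pos_if_qfun_ne_1:
  assumes "A \<subseteq> V" "dominating A" "qfun V E A \<noteq> 1"
  shows "\<exists>a\<in>V - A. comp_gain A a > 0"
proof -
  have "V \<noteq> {}" using card_V by auto
  then obtain x where "x \<in> V" by blast
  let ?C = "qcomp A x"
  have qcomp_mem: "qcomp A y = ?C" if "y \<in> ?C" for y
    using component_of_eq_if_mem[where R = "qgraph A", OF qgraph_sym that \<open>x \<in> V\<close>] .
  obtain y where "y \<in> V" "qcomp A y \<noteq> ?C"
    using component_of_other_if_num_comps_ne_1[of V "qgraph A" x] assms(3) \<open>x \<in> V\<close>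
    unfolding qfun_def by blast
  then have "y \<in> V - ?C" using qcomp_mem by blast
  then obtain a b where ab: "a \<in> ?C" "b \<in> V - ?C" "E a b"
    using connected_edge_leaving[OF connected mem_component_of_self[OF \<open>x \<in> V\<close>] _ component_of_subset]
    by blast
  have "a \<in> V" "b \<in> V" using ab(3) E_in_V by auto
  have "b \<in> qcomp A b" using \<open>b \<in> V\<close> by (rule mem_component_of_self)
  then have ne: "qcomp A a \<noteq> qcomp A b" using qcomp_mem[OF ab(1)] ab(2) by auto
  then have "a \<notin> A" using qcomp_eq_if_edge[OF ab(3)] by blast
  then obtain s where "s \<in> A" "E a s"
    using dominating_has_neighbour[OF assms(2)] \<open>a \<in> V\<close> by blast
  then have "pcomp A s \<in> pcomp A ` (N a \<inter> A)" by (simp add: mem_nbrs_iff)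
  then have "pcomps_at A a \<ge> 1"
    unfolding pcomps_at_def using finite_nbrs by (simp add: Suc_le_eq card_gt_0_iff) blast
  moreover have "{qcomp A a, qcomp A b} \<subseteq> qcomp A ` insert a (N a)" using ab(3) mem_nbrs_iff by auto
  then have "card {qcomp A a, qcomp A b} \<le> qcomps_at A a"
    unfolding qcomps_at_def using finite_nbrs by (intro card_mono) auto
  then have "qcomps_at A a \<ge> 2" using ne by simp
  ultimately have "comp_gain A a > 0" using comp_gain_ge[OF \<open>a \<in> V\<close> assms(1)] by linarith
  then show ?thesis using \<open>a \<in> V\<close> \<open>a \<notin> A\<close> by blast
qed

text \<open>If the \<open>q\<close>-graph is connected but \<open>G[A]\<close> is not, a \<open>q\<close>-path leaves a component \<open>C\<close> of
  \<open>G[A]\<close> together with its outside neighbours; the vertex where it does so is an outside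
  neighbour of two components of \<open>G[A]\<close>.\<close>
lemma comp_gain_pos_if_pfun_ne_1:
  assumes "A \<subseteq> V" "x \<in> A" "qfun V E A = 1" "pfun V E A \<noteq> 1"
  shows "\<exists>a\<in>V - A. comp_gain A a > 0"
proof -
  let ?C = "pcomp A x"
  have pcomp_mem: "pcomp A y = ?C" if "y \<in> ?C" for y
    using component_of_eq_if_mem[where R = E, OF E_sym that assms(2)] .
  have "?C \<subseteq> A" by (rule component_of_subset)
  obtain y where "y \<in> A" "pcomp A y \<noteq> ?C"
    using component_of_other_if_num_comps_ne_1[of A E x] assms(2,4) unfolding pfun_def by blast
  then have "y \<notin> ?C" using pcomp_mem by blast
  define Y where "Y = ?C \<union> {a \<in> V - A. \<exists>c\<in>?C. E a c}"
  have "x \<in> Y" using mem_component_of_self[OF assms(2)] by (simp add: Y_def)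
  moreover have "Y \<subseteq> V" using \<open>?C \<subseteq> A\<close> assms(1) by (auto simp: Y_def)
  moreover have "y \<in> V - Y" using \<open>y \<in> A\<close> \<open>y \<notin> ?C\<close> assms(1) by (auto simp: Y_def)
  ultimately obtain a b where ab: "a \<in> Y" "b \<in> V - Y" "qgraph A a b"
    using connected_edge_leaving[of V "qgraph A" x Y] assms(3) unfolding qfun_def by blast
  have "a \<notin> ?C"
  proof
    assume "a \<in> ?C"
    show False
    proof (cases "b \<in> A")
      case True
      have "pcomp A b = pcomp A a"
        using pcomp_eq_if_edge[of a b A] ab(3) \<open>a \<in> ?C\<close> \<open>?C \<subseteq> A\<close> True by blast
      then have "b \<in> ?C" using pcomp_mem[OF \<open>a \<in> ?C\<close>] mem_component_of_self[OF True, of E] by simp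
      then show False using ab(2) by (simp add: Y_def)
    next
      case False
      then have "b \<in> V - A" "E b a" using ab(2,3) E_sym by auto
      then show False using ab(2) \<open>a \<in> ?C\<close> unfolding Y_def by blast
    qed
  qed
  then obtain c where c: "a \<in> V - A" "c \<in> ?C" "E a c" using ab(1) by (auto simp: Y_def)
  have "b \<in> A" "b \<notin> ?C" using ab(2,3) c(1) by (auto simp: Y_def)
  then have "pcomp A b \<noteq> pcomp A c" using pcomp_mem[OF c(2)] mem_component_of_self[of b A E] by auto
  moreover have "{pcomp A b, pcomp A c} \<subseteq> pcomp A ` (N a \<inter> A)"
    using \<open>b \<in> A\<close> c \<open>?C \<subseteq> A\<close> ab(3) mem_nbrs_iff by auto
  then have "card {pcomp A b, pcomp A c} \<le> pcomps_at A a"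
    unfolding pcomps_at_def using finite_nbrs by (intro card_mono) auto
  ultimately have "pcomps_at A a \<ge> 2" by simp
  then have "comp_gain A a > 0"
    using comp_gain_ge[of a A] assms(1) qcomps_at_pos[of A a] c(1) by fastforce
  then show ?thesis using c(1) by blast
qed

lemma greedy_output_qfun:
  assumes "greedy_output (ffun V E w) V S"
  shows "qfun V E S = 1"
  using comp_gain_pos_if_qfun_ne_1[OF greedy_output_subset[OF assms] greedy_output_dominating[OF assms]]
    ffun_gain_pos_iff[OF _ greedy_output_subset[OF assms]] greedy_output_no_gain[OF assms]
  by blast

lemma greedy_output_pfun:
  assumes "greedy_output (ffun V E w) V S"
  shows "pfun V E S = 1"
proof -
  have "V \<noteq> {}" using card_V by auto
  then obtain v where "v \<in> V" by blast
  have "S \<noteq> {}"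
  proof
    assume "S = {}"
    then have "W v / 2 \<le> 0"
      using greedy_output_dominating[OF assms] \<open>v \<in> V\<close> by (auto simp: dominating_def WA_def)
    then show False using W_pos[OF \<open>v \<in> V\<close>] by simp
  qed
  then obtain x where "x \<in> S" by blast
  then show ?thesis
    using comp_gain_pos_if_pfun_ne_1[OF greedy_output_subset[OF assms] _ greedy_output_qfun[OF assms]]
      ffun_gain_pos_iff[OF _ greedy_output_subset[OF assms]] greedy_output_no_gain[OF assms]
    by blast
qed

lemma greedy_output_is_WPPICDS:
  assumes "greedy_output (ffun V E w) V S"
  shows "is_WPPICDS V E w S"
  using greedy_output_subset[OF assms] greedy_output_dominating[OF assms] greedy_output_pfun[OF assms]
  by (simp add: is_WPPICDS_iff pfun_def)

lemma ffun_eq_fmax_if_is_WPPICDS: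
  assumes "is_WPPICDS V E w S" "qfun V E S = 1"
  shows "ffun V E w S = fmax"
proof -
  have "hfun V E w S = hmax"
    unfolding hfun_def hmax_def using assms(1) by (intro sum.cong) (auto simp: hA_def is_WPPICDS_def)
  then show ?thesis using assms by (simp add: ffun_def cfun_def fmax_def is_WPPICDS_def pfun_def)
qed

subsection \<open>The approximation ratio\<close>

lemma W_le_Wmax: "v \<in> V \<Longrightarrow> W v \<le> Wmax V E w"
  unfolding Wmax_def using finite_V by (intro Max_ge) auto

lemma card_nbrs_le_max_degree: "v \<in> V \<Longrightarrow> card (N v) \<le> max_degree V E"
  unfolding max_degree_def using finite_V by (intro Max_ge) auto

lemma sum_WA_singleton: "(\<Sum>v\<in>V. WA V E w {b} v) = W b"
proof -
  have "WA V E w {b} v = (if v \<in> N b then w b v else 0)" for v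
  proof -
    have "N v \<inter> {b} = (if E v b then {b} else {})" using E_in_V by (auto simp: nbrs_def)
    moreover have "E v b \<longleftrightarrow> v \<in> N b" using E_sym mem_nbrs_iff by blast
    ultimately show ?thesis by (simp add: WA_def weight_sym)
  qed
  then have "(\<Sum>v\<in>V. WA V E w {b} v) = (\<Sum>v\<in>V. if v \<in> N b then w b v else 0)"
    by simp
  also have "\<dots> = sum (w b) (V \<inter> N b)" using finite_V by (rule sum.inter_restrict[symmetric])
  also have "\<dots> = W b" by (simp add: WA_def Int_commute)
  finally show ?thesis .
qed

lemma hfun_singleton_le: "b \<in> V \<Longrightarrow> hfun V E w {b} \<le> 3/2 * W b"
proof -
  assume "b \<in> V"
  have "hA V E w {b} v \<le> (if v = b then W b / 2 else 0) + WA V E w {b} v" for v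
    using WA_nonneg[of "{b}" v] by (auto simp: hA_eq)
  then have "hfun V E w {b} \<le> (\<Sum>v\<in>V. (if v = b then W b / 2 else 0) + WA V E w {b} v)"
    unfolding hfun_def by (intro sum_mono)
  also have "\<dots> = W b / 2 + W b" using \<open>b \<in> V\<close> finite_V by (simp add: sum.distrib sum_WA_singleton)
  finally show ?thesis by simp
qed

text \<open>Only the edges at \<open>b\<close> are present in \<open>qgraph {b}\<close>, so every vertex outside \<open>N b\<close> other than
  \<open>b\<close> is a component of its own.\<close>
lemma qfun_singleton_ge:
  assumes "b \<in> V"
  shows "qfun V E {b} + card (N b) \<ge> card V"
proof -
  have alone: "qcomp {b} x = {x}" if "x \<in> V - N b" "x \<noteq> b" for x
    using that by (intro component_of_isolated) (auto simp: mem_nbrs_iff dest: E_sym)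
  have "inj_on (qcomp {b}) (V - N b)"
  proof
    fix x y assume xy: "x \<in> V - N b" "y \<in> V - N b" "qcomp {b} x = qcomp {b} y"
    have "x \<in> qcomp {b} x" "y \<in> qcomp {b} y" using xy(1,2) by (simp_all add: mem_component_of_self)
    show "x = y"
    proof (rule ccontr)
      assume "x \<noteq> y"
      then consider "x \<noteq> b" | "y \<noteq> b" by blast
      then show False
      proof cases
        case 1
        then have "y \<in> {x}" using alone[OF xy(1)] xy(3) \<open>y \<in> qcomp {b} y\<close> by simp
        then show False using \<open>x \<noteq> y\<close> by simp
      next
        case 2
        then have "x \<in> {y}" using alone[OF xy(2)] xy(3) \<open>x \<in> qcomp {b} x\<close> by simp
        then show False using \<open>x \<noteq> y\<close> by simp
      qed
    qed
  qed
  then have "card (V - N b) = card (qcomp {b} ` (V - N b))" by (rule card_image[symmetric])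
  also have "\<dots> \<le> card (qcomp {b} ` V)" using finite_V by (intro card_mono) auto
  finally have "card (V - N b) \<le> card (qcomp {b} ` V)" .
  moreover have "card (V - N b) = card V - card (N b)"
    by (rule card_Diff_subset[OF finite_nbrs nbrs_subset])
  moreover have "card (N b) \<le> card V" by (rule card_mono[OF finite_V nbrs_subset])
  ultimately show ?thesis by (simp add: qfun_def num_comps_eq_card_components)
qed

lemma scaled_ffun_singleton_gain_le:
  assumes "b \<in> V"
  shows "real_of_int L * (ffun V E w {b} - ffun V E w {})
     \<le> 3/2 * real_of_int L * real_of_rat (Wmax V E w) + real (max_degree V E) - 1"
proof -
  have "L > 0" using Lmax_pos by simp
  have "hfun V E w {} \<ge> 0" unfolding hfun_def by (intro sum_nonneg hA_nonneg)
  then have "hfun V E w {b} - hfun V E w {} \<le> 3/2 * Wmax V E w"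
    using hfun_singleton_le[OF assms] W_le_Wmax[OF assms] by simp
  then have "real_of_rat (hfun V E w {b} - hfun V E w {}) \<le> real_of_rat (3/2 * Wmax V E w)"
    by (simp only: of_rat_less_eq)
  also have "\<dots> = 3/2 * real_of_rat (Wmax V E w)" by (simp add: of_rat_mult of_rat_divide)
  finally have "real_of_rat (hfun V E w {b} - hfun V E w {}) \<le> 3/2 * real_of_rat (Wmax V E w)" .
  then have "real_of_int L * real_of_rat (hfun V E w {b} - hfun V E w {})
      \<le> 3/2 * real_of_int L * real_of_rat (Wmax V E w)"
    using \<open>L > 0\<close> by (simp add: mult_left_mono)
  moreover have "comp_gain {} b \<le> int (max_degree V E) - 1"
  proof -
    have "pfun V E {} = 0" "pfun V E {b} = 1" by (simp_all add: pfun_def num_comps_eq_card_components)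
    moreover have "qfun V E {} \<le> card V"
      unfolding qfun_def num_comps_eq_card_components by (rule card_image_le[OF finite_V])
    ultimately show ?thesis
      using qfun_singleton_ge[OF assms] card_nbrs_le_max_degree[OF assms] by (simp add: comp_gain_def)
  qed
  then have "real_of_int (comp_gain {} b) \<le> real (max_degree V E) - 1"
    by (simp flip: of_int_le_iff)
  moreover have "real_of_int L * (ffun V E w {b} - ffun V E w {})
      = real_of_int L * real_of_rat (hfun V E w {b} - hfun V E w {}) + real_of_int (comp_gain {} b)"
    using ffun_gain_eq[of b "{}"] \<open>L > 0\<close> by (simp add: distrib_left)
  ultimately show ?thesis by linarith
qed

lemma log_argument_ge_1: "1 \<le> 3/2 * real_of_int L * real_of_rat (Wmax V E w) + real (max_degree V E)"
proof -
  have "V \<noteq> {}" using card_V by auto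
  then obtain v where "v \<in> V" by blast
  then have "Wmax V E w \<ge> 0" using W_pos[of v] W_le_Wmax[of v] by linarith
  then have "3/2 * real_of_int L * real_of_rat (Wmax V E w) \<ge> 0"
    using Lmax_pos by (simp add: zero_le_of_rat_iff)
  moreover obtain u where "E v u" using has_neighbour[OF \<open>v \<in> V\<close>] by blast
  then have "u \<in> N v" by (simp add: mem_nbrs_iff)
  then have "card (N v) \<ge> 1" using finite_nbrs[of v] by (simp add: Suc_le_eq card_gt_0_iff) blast
  then have "real (max_degree V E) \<ge> 1" using card_nbrs_le_max_degree[OF \<open>v \<in> V\<close>] by simp
  ultimately show ?thesis by linarith
qed

lemma greedy_output_card_le:
  assumes out: "greedy_output (ffun V E w) V S" and opt: "is_WPPICDS V E w B"
  shows "real (card S)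
    \<le> (2 + ln (3/2 * real_of_int L * real_of_rat (Wmax V E w) + real (max_degree V E))) * real (card B)"
proof -
  let ?A = "3/2 * real_of_int L * real_of_rat (Wmax V E w) + real (max_degree V E)"
  let ?f = "ffun V E w"
  let ?k = "real (card B)"
  have "B \<subseteq> V" "num_comps B E = 1" using opt by (auto simp: is_WPPICDS_iff)
  then have "finite B" "B \<noteq> {}" by (auto simp: finite_if_subset_V num_comps_eq_card_components)
  then have "?k \<ge> 1" by (simp add: Suc_le_eq card_gt_0_iff)
  show ?thesis
  proof (rule greedy_reach_card_le[where c = "real_of_int L"])
    show "greedy_reach ?f V S" using out by (simp add: greedy_output_def)
    show "?f S = fmax"
      using ffun_eq_fmax_if_is_WPPICDS greedy_output_is_WPPICDS[OF out] greedy_output_qfun[OF out] by blast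
    show "?k \<ge> 1" "?A \<ge> 1" by fact (rule log_argument_ge_1)
    have "real_of_int L * (fmax - ?f {}) - (?k - 1) \<le> (\<Sum>b\<in>B. real_of_int L * (?f {b} - ?f {}))"
      using scaled_deficit_le_sum_gains[OF _ opt, of "{}"] by simp
    also have "\<dots> \<le> (\<Sum>b\<in>B. ?A - 1)"
      using \<open>B \<subseteq> V\<close> scaled_ffun_singleton_gain_le by (intro sum_mono) auto
    finally show "real_of_int L * (fmax - ?f {}) - (?k - 1) \<le> ?k * (?A - 1)" by simp
  next
    fix X u
    assume reach: "greedy_reach ?f V X" and u: "u \<in> V - X" and pos: "?f (X \<union> {u}) - ?f X > 0"
      and best: "\<forall>u'\<in>V - X. ?f (X \<union> {u'}) - ?f X \<le> ?f (X \<union> {u}) - ?f X"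
    let ?g = "?f (insert u X) - ?f X"
    have "X \<subseteq> V" using reach by (rule greedy_reach_subset)
    have unit: "1 \<le> real_of_int L * ?g" using scaled_ffun_gain_ge_1[OF u \<open>X \<subseteq> V\<close>] pos by simp
    have "real_of_int L * (fmax - ?f X) - (?k - 1) \<le> (\<Sum>b\<in>B - X. real_of_int L * (?f (insert b X) - ?f X))"
      by (rule scaled_deficit_le_sum_gains[OF \<open>X \<subseteq> V\<close> opt])
    also have "\<dots> \<le> (\<Sum>b\<in>B - X. real_of_int L * ?g)"
      using best \<open>B \<subseteq> V\<close> Lmax_pos by (intro sum_mono mult_left_mono) auto
    also have "\<dots> \<le> ?k * (real_of_int L * ?g)"
      using unit \<open>finite B\<close> by (simp add: card_mono mult_right_mono)
    finally show "1 \<le> real_of_int L * (?f (X \<union> {u}) - ?f X) \<and>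
      real_of_int L * (fmax - ?f X) - (?k - 1) \<le> ?k * (real_of_int L * (?f (X \<union> {u}) - ?f X))"
      using unit by simp
  qed
qed

end

theorem mainTheorem20:
  fixes V :: "'a set" and E :: "'a \<Rightarrow> 'a \<Rightarrow> bool" and w :: "'a \<Rightarrow> 'a \<Rightarrow> rat"
    and S Sstar :: "'a set"
  assumes "simple_graph V E"
    and "card V \<ge> 2"
    and "num_comps V E = 1"
    and "\<forall>u v. E u v \<longrightarrow> w u v > 0"
    and "\<forall>u v. w u v = w v u"
    and "greedy_output (ffun V E w) V S"
    and "is_WPPICDS V E w Sstar"
    and "\<forall>T. is_WPPICDS V E w T \<longrightarrow> card Sstar \<le> card T"
  shows "is_WPPICDS V E w S \<and>
    real (card S) \<le> (2 + ln (3/2 * real_of_int (Lmax V E w) * real_of_rat (Wmax V E w)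
                          + real (max_degree V E))) * real (card Sstar)"
proof -
  interpret connected_weighted_graph V E w
    using assms(1-5) by unfold_locales auto
  \<comment> \<open>The bound holds for every WPPICDS.\<close>
  show ?thesis
    using greedy_output_is_WPPICDS[OF assms(6)] greedy_output_card_le[OF assms(6,7)] by blast
qed

end
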